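(* Let $n>5$ be prime and let $\gamma$ be a probability distribution on $\mathbb{Z}_n$ with $\gamma(k)\in\mathbb{Q}$ for all $k$. Suppose $\hat{\gamma}(x)=\hat{\gamma}(y)$ for some $x,y\in\mathbb{Z}_n\setminus\{0\}$. Then $\gamma(kx^{-1}y)=\gamma(k)$ for all $k\in\mathbb{Z}_n$, where all operations are in the field $\mathbb{Z}_n$.
   Context: $\hat{\gamma}(x)=\sum_{k\in\mathbb{Z}_n}\omega_n^{kx}\gamma(k)$ with $\omega_n=e^{-2\pi i/n}$. *)

theory Defs
  imports "HOL-Analysis.Analysis" "HOL-Number_Theory.Number_Theory"
begin

(* Z_n is represented by {0..<n} with arithmetic mod n. *)

definition omega :: "nat \<Rightarrow> complex" where
  "omega n = cis (- 2 * pi / real n)"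

definition fourier :: "nat \<Rightarrow> (nat \<Rightarrow> real) \<Rightarrow> nat \<Rightarrow> complex" where
  "fourier n \<gamma> x = (\<Sum>k<n. omega n ^ (k * x) * complex_of_real (\<gamma> k))"

definition zn_inv :: "nat \<Rightarrow> nat \<Rightarrow> nat" where
  "zn_inv n x = (THE x'. x' < n \<and> (x * x') mod n = 1)"

definition is_prob_dist :: "nat \<Rightarrow> (nat \<Rightarrow> real) \<Rightarrow> bool" where
  "is_prob_dist n \<gamma> \<longleftrightarrow> (\<forall>k<n. \<gamma> k \<ge> 0) \<and> (\<Sum>k<n. \<gamma> k) = 1"

end

theory Submission
  imports Defs "Berlekamp_Zassenhaus.Factor_Bound"
begin

text \<open>
  Reindexing the two transforms by the bijections k \<mapsto> k x and k \<mapsto> k y of \<int>/n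
  turns the hypothesis into a rational linear relation
  sum_j (\<gamma>(j/x) - \<gamma>(j/y)) \<omega>^j = 0 of degree less than n.
  Since \<omega> is a root of 1 + X + ... + X^(n-1), which is irreducible over \<rat> for prime n
  (Eisenstein's criterion after the substitution X \<mapsto> X + 1), such a relation is a constant
  multiple of this polynomial, i.e. all its coefficients are equal. The coefficient at j = 0
  is zero, so \<gamma>(j/x) = \<gamma>(j/y) for all j; put j = k y.
\<close>

hide_const (open) up_ring.coeff up_ring.monom module.smult

lemma eisenstein_irreducible\<^sub>d:
  fixes F :: "'a::idom poly" and p :: 'a
  assumes p: "prime_elem p" and deg: "degree F > 0"
    and low: "\<And>j. j < degree F \<Longrightarrow> p dvd coeff F j"
    and lead: "\<not> p dvd lead_coeff F" and const: "\<not> p\<^sup>2 dvd coeff F 0"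
  shows "irreducible\<^sub>d F"
proof
  fix G H assume "degree G > 0" "degree H > 0" and FGH: "F = G * H"
  have "G \<noteq> 0" "H \<noteq> 0" using lead FGH by auto
  then have dF: "degree F = degree G + degree H" using FGH degree_mult_eq by blast
  have "lead_coeff F = lead_coeff G * lead_coeff H" using FGH lead_coeff_mult by blast
  then have "\<not> p dvd lead_coeff G" "\<not> p dvd lead_coeff H" using lead by auto
  then obtain i j where
    i: "\<not> p dvd coeff G i" "\<And>a. a < i \<Longrightarrow> p dvd coeff G a" and
    j: "\<not> p dvd coeff H j" "\<And>a. a < j \<Longrightarrow> p dvd coeff H a"
    using exists_least_iff[of "\<lambda>i. \<not> p dvd coeff G i"]
      exists_least_iff[of "\<lambda>i. \<not> p dvd coeff H i"] by blast
  have "i \<le> degree G" "j \<le> degree H"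
    using i(1) j(1) by (auto intro: le_degree)
  \<comment> \<open>The lowest coefficients of G and H not divisible by p give the only
      summand of coeff F (i + j) not divisible by p.\<close>
  have cF: "coeff F (i + j) = coeff G i * coeff H j
      + (\<Sum>a\<in>{..i+j}-{i}. coeff G a * coeff H (i + j - a))"
    unfolding FGH coeff_mult by (subst sum.remove[of _ i]) auto
  have "p dvd (\<Sum>a\<in>{..i+j}-{i}. coeff G a * coeff H (i + j - a))"
  proof (rule dvd_sum)
    fix a assume "a \<in> {..i+j}-{i}"
    then have "a < i \<or> i + j - a < j" by auto
    then show "p dvd coeff G a * coeff H (i + j - a)"
      using i(2) j(2) by (metis dvd_mult dvd_mult2)
  qed
  moreover have "\<not> p dvd coeff G i * coeff H j"
    using i(1) j(1) by (simp add: prime_elem_dvd_mult_iff[OF p])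
  ultimately have "\<not> p dvd coeff F (i + j)" unfolding cF using dvd_add_left_iff by blast
  then have "\<not> i + j < degree F" using low by blast
  then have "i = degree G" "j = degree H" using \<open>i \<le> degree G\<close> \<open>j \<le> degree H\<close> dF by auto
  then have "p dvd coeff G 0" "p dvd coeff H 0"
    using i(2) j(2) \<open>degree G > 0\<close> \<open>degree H > 0\<close> by auto
  then have "p\<^sup>2 dvd coeff G 0 * coeff H 0" by (simp add: power2_eq_square mult_dvd_mono)
  then show False using const unfolding FGH coeff_mult_0 by blast
qed (rule deg)

lemma irreducible\<^sub>d_pcompose_linear:
  fixes F :: "'a::idom poly"
  assumes "irreducible\<^sub>d (F \<circ>\<^sub>p [:c, 1:])"
  shows "irreducible\<^sub>d F"
proof
  show "degree F > 0" using irreducible\<^sub>dD(1)[OF assms] by (simp add: degree_pcompose)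
  fix G H assume "degree G < degree F" "degree H < degree F" and F: "F = G * H"
  have "F \<circ>\<^sub>p [:c, 1:] = (G \<circ>\<^sub>p [:c, 1:]) * (H \<circ>\<^sub>p [:c, 1:])"
    unfolding F by (rule pcompose_mult)
  moreover have "degree (G \<circ>\<^sub>p [:c, 1:]) < degree (F \<circ>\<^sub>p [:c, 1:])"
    and "degree (H \<circ>\<^sub>p [:c, 1:]) < degree (F \<circ>\<^sub>p [:c, 1:])"
    using \<open>degree G < degree F\<close> \<open>degree H < degree F\<close> by (simp_all add: degree_pcompose)
  ultimately show False using irreducible\<^sub>dD(2)[OF assms] by blast
qed

definition geometric_poly :: "nat \<Rightarrow> 'a::comm_semiring_1 poly" where
  "geometric_poly n = (\<Sum>k<n. monom 1 k)"

lemma coeff_geometric_poly: "coeff (geometric_poly n) j = (if j < n then 1 else 0)"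
  by (simp add: geometric_poly_def coeff_sum coeff_monom)

lemma degree_geometric_poly:
  "degree (geometric_poly n :: 'a::comm_semiring_1 poly) = n - 1"
proof (cases n)
  case (Suc m)
  then show ?thesis
    by (intro antisym degree_le le_degree) (auto simp: coeff_geometric_poly)
qed (simp add: geometric_poly_def)

lemma poly_geometric_poly: "poly (geometric_poly n) z = (\<Sum>k<n. z ^ k)"
  by (simp add: geometric_poly_def poly_sum poly_monom)

lemma map_poly_geometric_poly:
  assumes "h 0 = 0" and "h 1 = 1"
  shows "map_poly h (geometric_poly n) = geometric_poly n"
  using assms by (simp add: poly_eq_iff coeff_geometric_poly coeff_map_poly)

lemma geometric_poly_shift:
  "[:0, 1:] * (geometric_poly n \<circ>\<^sub>p [:1, 1:]) = [:1, 1:] ^ n - (1 :: 'a::comm_ring_1 poly)"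
proof -
  have "geometric_poly n \<circ>\<^sub>p [:1, 1:] = (\<Sum>k<n. [:1, 1:] ^ k :: 'a poly)"
    by (simp add: geometric_poly_def pcompose_sum monom_altdef pcompose_hom.hom_power pcompose_pCons)
  moreover have "[:1, 1:] - 1 = ([:0, 1:] :: 'a poly)"
    by (simp add: poly_eq_iff coeff_pCons split: nat.split)
  ultimately show ?thesis using power_diff_1_eq[of "[:1, 1::'a:]" n] by simp
qed

lemma coeff_geometric_poly_shift:
  assumes "j < n"
  shows "coeff (geometric_poly n \<circ>\<^sub>p [:1, 1:]) j = (of_nat (n choose Suc j) :: 'a::comm_ring_1)"
proof -
  have "coeff (geometric_poly n \<circ>\<^sub>p [:1, 1:]) j
      = coeff ([:0, 1:] * (geometric_poly n \<circ>\<^sub>p [:1, 1:])) (Suc j)"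
    by simp
  also have "\<dots> = coeff ([:1, 1:] ^ n - 1 :: 'a poly) (Suc j)" by (simp only: geometric_poly_shift)
  also have "\<dots> = of_nat (n choose Suc j)" using assms coeff_linear_poly_power[of "Suc j" n 1 "1::'a"] by simp
  finally show ?thesis .
qed

lemma irreducible\<^sub>d_geometric_poly_int:
  assumes "prime p"
  shows "irreducible\<^sub>d (geometric_poly p :: int poly)"
proof (rule irreducible\<^sub>d_pcompose_linear, rule eisenstein_irreducible\<^sub>d)
  let ?F = "geometric_poly p \<circ>\<^sub>p [:1, 1:] :: int poly"
  have p: "p \<ge> 2" using assms prime_ge_2_nat by blast
  have dF: "degree ?F = p - 1" by (simp add: degree_pcompose degree_geometric_poly)
  show "prime_elem (int p)" using assms prime_imp_prime_elem[of "int p"] by simp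
  show "degree ?F > 0" using dF p by simp
  show "int p dvd coeff ?F j" if "j < degree ?F" for j
  proof -
    have "Suc j < p" using that dF by simp
    then have "p dvd p choose Suc j" using assms by (intro dvd_choose_prime) auto
    moreover have "coeff ?F j = int (p choose Suc j)"
      using coeff_geometric_poly_shift[of j p, where 'a=int] \<open>Suc j < p\<close> by simp
    ultimately show ?thesis by (simp add: int_dvd_int_iff)
  qed
  show "\<not> int p dvd lead_coeff ?F"
    using dF p coeff_geometric_poly_shift[of "p - 1" p, where 'a=int] by simp
  have "\<not> (int p)\<^sup>2 dvd int p"
  proof
    assume "(int p)\<^sup>2 dvd int p"
    then have "int p * int p \<le> int p * 1" using p by (auto dest: zdvd_imp_le simp: power2_eq_square)
    then show False using p by simp
  qed
  moreover have "coeff ?F 0 = int p" using coeff_geometric_poly_shift[of 0 p, where 'a=int] p by simp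
  ultimately show "\<not> (int p)\<^sup>2 dvd coeff ?F 0" by simp
qed

lemma irreducible\<^sub>d_geometric_poly:
  assumes "prime p"
  shows "irreducible\<^sub>d (geometric_poly p :: rat poly)"
  using irreducible\<^sub>d_int_rat[OF irreducible\<^sub>d_geometric_poly_int[OF assms]]
  by (simp add: map_poly_geometric_poly)

lemma irreducible\<^sub>d_dvd_of_common_root:
  fixes P f :: "'a::field_gcd poly" and hom :: "'a \<Rightarrow> 'b::field"
  assumes "field_hom hom" and P: "irreducible\<^sub>d P"
    and "poly (map_poly hom P) z = 0" and "poly (map_poly hom f) z = 0"
  shows "P dvd f"
proof -
  interpret field_hom hom by fact
  interpret map_poly_hom: map_poly_idom_hom hom ..
  \<comment> \<open>By Bezout, gcd f P also vanishes at z, so it is a nonconstant divisor of P.\<close>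
  define d where "d = gcd f P"
  have "d = fst (bezout_coefficients f P) * f + snd (bezout_coefficients f P) * P"
    unfolding d_def by (rule bezout_coefficients_fst_snd[symmetric])
  then have dz: "poly (map_poly hom d) z = 0" using assms(3,4) by (simp add: hom_distribs)
  have "P \<noteq> 0" using irreducible\<^sub>dD(1)[OF P] by auto
  then have "d \<noteq> 0" unfolding d_def by simp
  have "degree d > 0"
  proof (rule ccontr)
    assume "\<not> degree d > 0"
    then obtain c where "d = [:c:]" by (auto elim: degree_eq_zeroE)
    then show False using \<open>d \<noteq> 0\<close> dz by simp
  qed
  then obtain c where "c \<noteq> 0" "P = smult c d"
    using irreducible\<^sub>d_dvd_smult[OF _ P, of d] unfolding d_def by auto
  then have "P dvd d" by (simp add: smult_dvd_iff)
  then show "P dvd f" unfolding d_def using dvd_trans gcd_dvd1 by blast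
qed

lemma rational_relation_geometric_root_const:
  fixes c :: "nat \<Rightarrow> rat" and z :: "'a::field_char_0"
  assumes "prime p" and root: "(\<Sum>k<p. z ^ k) = 0"
    and rel: "(\<Sum>j<p. of_rat (c j) * z ^ j) = 0"
    and "i < p" and "j < p"
  shows "c i = c j"
proof -
  define f where "f = (\<Sum>k<p. monom (c k) k)"
  have coeff_f: "coeff f k = (if k < p then c k else 0)" for k
    by (simp add: f_def coeff_sum coeff_monom)
  interpret map_poly_hom: map_poly_comm_ring_hom "of_rat :: rat \<Rightarrow> 'a" ..
  have "poly (map_poly of_rat f) z = 0"
    using rel by (simp add: f_def map_poly_hom.hom_sum of_rat_hom.map_poly_hom_monom poly_sum poly_monom)
  moreover have "poly (map_poly of_rat (geometric_poly p)) z = 0"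
    using root by (simp add: map_poly_geometric_poly poly_geometric_poly)
  ultimately have "geometric_poly p dvd f"
    using irreducible\<^sub>d_dvd_of_common_root[OF of_rat_hom.field_hom_axioms] irreducible\<^sub>d_geometric_poly[OF \<open>prime p\<close>]
    by blast
  then obtain g where f: "f = geometric_poly p * g" by (elim dvdE)
  have "degree (geometric_poly p :: rat poly) = p - 1" by (rule degree_geometric_poly)
  moreover have "degree f \<le> p - 1" by (rule degree_le) (auto simp: coeff_f)
  ultimately have "degree g = 0"
    using degree_mult_eq[of "geometric_poly p" g] irreducible\<^sub>d_geometric_poly[OF \<open>prime p\<close>]
    unfolding f by (cases "g = 0") (auto dest: irreducible\<^sub>dD(1))
  then obtain a where "g = [:a:]" by (elim degree_eq_zeroE)
  then have "c k = a" if "k < p" for k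
    using coeff_f[of k] that by (simp add: f coeff_geometric_poly)
  then show ?thesis using \<open>i < p\<close> \<open>j < p\<close> by simp
qed

lemma omega_pow_self:
  assumes "n > 0"
  shows "omega n ^ n = 1"
proof -
  have "omega n ^ n = cis (real n * (- 2 * pi / real n))" unfolding omega_def by (rule Complex.DeMoivre)
  also have "\<dots> = 1" using assms by (simp add: complex_eq_iff)
  finally show ?thesis .
qed

lemma omega_neq_1:
  assumes "n > 1"
  shows "omega n \<noteq> 1"
proof
  assume "omega n = 1"
  then have "cos (2 * pi / real n) = cos 0" unfolding omega_def by (simp add: complex_eq_iff)
  moreover have "cos (2 * pi / real n) < cos 0"
  proof (rule cos_monotone_0_pi)
    have "2 * pi / real n \<le> 2 * pi / 2" using assms by (intro divide_left_mono) auto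
    then show "2 * pi / real n \<le> pi" by simp
  qed (use assms in simp_all)
  ultimately show False by simp
qed

lemma sum_omega_powers:
  assumes "n > 1"
  shows "(\<Sum>k<n. omega n ^ k) = 0"
proof -
  have "(omega n - 1) * (\<Sum>k<n. omega n ^ k) = omega n ^ n - 1" by (simp add: power_diff_1_eq)
  then show ?thesis using assms omega_pow_self omega_neq_1 by simp
qed

lemma omega_pow_mod:
  assumes "n > 0"
  shows "omega n ^ (m mod n) = omega n ^ m"
proof -
  have "omega n ^ m = (omega n ^ n) ^ (m div n) * omega n ^ (m mod n)"
    by (simp flip: power_mult power_add)
  then show ?thesis using omega_pow_self[OF assms] by simp
qed

lemma zn_inv_inverse:
  assumes "prime n" and "x \<in> {1..<n}"
  shows "zn_inv n x < n" and "(x * zn_inv n x) mod n = 1"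
proof -
  have "\<not> n dvd x" using assms(2) by (auto dest: dvd_imp_le)
  have "algebraic_semidom_class.coprime x n"
    using prime_imp_coprime[OF assms(1) \<open>\<not> n dvd x\<close>] by (simp add: ac_simps)
  have "n > 1" using assms(1) prime_gt_1_nat by blast
  obtain u where "[x * u = 1] (mod n)"
    using cong_solve_coprime_nat[OF \<open>algebraic_semidom_class.coprime x n\<close>] by auto
  have "\<exists>!v. v < n \<and> (x * v) mod n = 1"
  proof (rule ex1I[of _ "u mod n"])
    show "u mod n < n \<and> (x * (u mod n)) mod n = 1"
      using \<open>[x * u = 1] (mod n)\<close> \<open>n > 1\<close> by (simp add: cong_def mod_mult_right_eq)
    fix v assume v: "v < n \<and> (x * v) mod n = 1"
    then have "[x * v = x * (u mod n)] (mod n)"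
      using \<open>[x * u = 1] (mod n)\<close> \<open>n > 1\<close> by (simp add: cong_def mod_mult_right_eq)
    then have "[v = u mod n] (mod n)"
      using cong_mult_lcancel_nat[OF \<open>algebraic_semidom_class.coprime x n\<close>] by blast
    then show "v = u mod n" using v \<open>n > 1\<close> by (simp add: cong_def)
  qed
  then show "zn_inv n x < n" and "(x * zn_inv n x) mod n = 1"
    unfolding zn_inv_def by (metis (mono_tags, lifting) theI')+
qed

lemma mod_mult_inverse_cancel:
  fixes n u v k :: nat
  assumes "(u * v) mod n = 1" and "k < n"
  shows "((k * u) mod n * v) mod n = k"
proof -
  have "((k * u) mod n * v) mod n = (k * ((u * v) mod n)) mod n"
    by (simp add: mod_mult_left_eq mod_mult_right_eq mult.assoc)
  then show ?thesis using assms by simp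
qed

lemma sum_reindex_mult_mod:
  fixes g :: "nat \<Rightarrow> 'a::comm_monoid_add"
  assumes "n > 0" and "(u * v) mod n = 1"
  shows "(\<Sum>k<n. g ((k * u) mod n)) = (\<Sum>j<n. g j)"
proof (rule sum.reindex_bij_witness[where i = "\<lambda>j. (j * v) mod n" and j = "\<lambda>k. (k * u) mod n"])
  have "(v * u) mod n = 1" using assms(2) by (simp add: mult.commute)
  then show "\<And>j. j \<in> {..<n} \<Longrightarrow> ((j * v) mod n * u) mod n = j"
    by (auto intro: mod_mult_inverse_cancel)
qed (use assms mod_mult_inverse_cancel in auto)

lemma fourier_reindex:
  assumes "n > 0" and "(u * v) mod n = 1"
  shows "fourier n \<gamma> u = (\<Sum>j<n. omega n ^ j * complex_of_real (\<gamma> ((j * v) mod n)))"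
proof -
  have "fourier n \<gamma> u
      = (\<Sum>k<n. omega n ^ ((k * u) mod n) * complex_of_real (\<gamma> (((k * u) mod n * v) mod n)))"
    unfolding fourier_def using assms by (intro sum.cong) (simp_all add: omega_pow_mod mod_mult_inverse_cancel)
  also have "\<dots> = (\<Sum>j<n. omega n ^ j * complex_of_real (\<gamma> ((j * v) mod n)))"
    using sum_reindex_mult_mod[OF assms] .
  finally show ?thesis .
qed

lemma of_real_of_rat: "of_real (of_rat r) = (of_rat r :: 'a::{real_field,field_char_0})"
  by (cases r) (simp add: of_rat_rat)

theorem lemma1:
  fixes n :: nat and \<gamma> :: "nat \<Rightarrow> real" and x y :: nat
  assumes "prime n" and "n > 5"
    and "is_prob_dist n \<gamma>"
    and "\<forall>k<n. \<gamma> k \<in> \<rat>"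
    and "x \<in> {1..<n}" and "y \<in> {1..<n}"
    and "fourier n \<gamma> x = fourier n \<gamma> y"
  shows "\<forall>k<n. \<gamma> ((k * zn_inv n x * y) mod n) = \<gamma> k"
proof (intro allI impI)
  fix k assume "k < n"
  define xi yi where "xi = zn_inv n x" and "yi = zn_inv n y"
  have "n > 0" and "n > 1" using assms(2) by simp_all
  have xi: "(x * xi) mod n = 1" and yi: "(y * yi) mod n = 1"
    unfolding xi_def yi_def using zn_inv_inverse assms(1,5,6) by blast+
  have "\<forall>j. \<exists>r. j < n \<longrightarrow> \<gamma> j = of_rat r" using assms(4) by (auto elim: Rats_cases)
  from choice[OF this] obtain q where q: "\<And>j. j < n \<Longrightarrow> \<gamma> j = of_rat (q j)" by blast
  define c where "c j = q ((j * xi) mod n) - q ((j * yi) mod n)" for j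
  have "(\<Sum>j<n. of_rat (c j) * omega n ^ j) = fourier n \<gamma> x - fourier n \<gamma> y"
    unfolding fourier_reindex[OF \<open>n > 0\<close> xi] fourier_reindex[OF \<open>n > 0\<close> yi]
    by (simp add: c_def q of_real_of_rat of_rat_diff algebra_simps sum_subtractf)
  with assms(7) have rel: "(\<Sum>j<n. of_rat (c j) * omega n ^ j) = 0" by simp
  have "c j = c 0" if "j < n" for j
    by (rule rational_relation_geometric_root_const[OF assms(1) sum_omega_powers[OF \<open>n > 1\<close>] rel
          that \<open>n > 0\<close>])
  then have "\<gamma> ((j * xi) mod n) = \<gamma> ((j * yi) mod n)" if "j < n" for j
    using that q \<open>n > 1\<close> by (simp add: c_def)
  from this[of "(k * y) mod n"] have "\<gamma> (((k * y) mod n * xi) mod n) = \<gamma> k"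
    using \<open>n > 0\<close> mod_mult_inverse_cancel[OF yi \<open>k < n\<close>] by simp
  moreover have "((k * y) mod n * xi) mod n = (k * zn_inv n x * y) mod n"
    by (simp add: xi_def mod_mult_left_eq mod_mult_right_eq ac_simps)
  ultimately show "\<gamma> ((k * zn_inv n x * y) mod n) = \<gamma> k" by simp
qed

end
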